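(* For every integer $k\ge 1$ there exists an acyclic temporal network $N=((V\cup \{s\},A),\tau)$ such that $\lambda_{N}(s,v)\ge k$ for all $v\in V$, but $N$ contains no two arc-disjoint spanning $\tau$-respecting $s$-arborescences.
   Context: A temporal network is a pair $N=(D,\tau)$ where $D=(V\cup\{s\},A)$ is a directed graph (parallel arcs allowed) with root $s$ entered by no arc, and $\tau:A\to\mathbb{N}$; it is acyclic if $D$ has no directed cycle. A directed path with arcs $a_1,\dots,a_\ell$ in order is $\tau$-respecting if $\tau(a_1)\le\dots\le\tau(a_\ell)$; $\lambda_N(s,v)$ is the maximum number of pairwise arc-disjoint $\tau$-respecting $(s,v)$-paths. An $s$-arborescence is an acyclic subgraph $F=(V'\cup\{s\},A')$ in which every vertex of $V'$ has in-degree exactly $1$; it is spanning if $V'=V$, and $\tau$-respecting if every path in $F$ from $s$ is $\tau$-respecting. *)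

theory Defs
  imports Main
begin

(* A temporal network N = ((V \<union> {s}, A), \<tau>): vertex set V, root s \<notin> V,
   finite arc set A of arc identifiers (parallel arcs = distinct identifiers),
   each arc a has tail (tail a) and head (head a); time labels \<tau> a :: nat. *)

definition temporal_network ::
  "'v set \<Rightarrow> 'v \<Rightarrow> 'a set \<Rightarrow> ('a \<Rightarrow> 'v) \<Rightarrow> ('a \<Rightarrow> 'v) \<Rightarrow> bool" where
  "temporal_network V s A tail head \<longleftrightarrow>
     finite V \<and> finite A \<and> s \<notin> V \<and>
     (\<forall>a\<in>A. tail a \<in> V \<union> {s} \<and> head a \<in> V \<union> {s} \<and> head a \<noteq> s)"

definition is_walk :: "'a set \<Rightarrow> ('a \<Rightarrow> 'v) \<Rightarrow> ('a \<Rightarrow> 'v) \<Rightarrow> 'a list \<Rightarrow> bool" where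
  "is_walk B tail head as \<longleftrightarrow> as \<noteq> [] \<and> set as \<subseteq> B \<and>
     (\<forall>i. Suc i < length as \<longrightarrow> head (as ! i) = tail (as ! Suc i))"

definition is_path :: "'a set \<Rightarrow> ('a \<Rightarrow> 'v) \<Rightarrow> ('a \<Rightarrow> 'v) \<Rightarrow> 'a list \<Rightarrow> bool" where
  "is_path B tail head as \<longleftrightarrow> is_walk B tail head as \<and>
     distinct (tail (List.hd as) # map head as)"

definition has_cycle :: "'a set \<Rightarrow> ('a \<Rightarrow> 'v) \<Rightarrow> ('a \<Rightarrow> 'v) \<Rightarrow> bool" where
  "has_cycle B tail head \<longleftrightarrow>
     (\<exists>as. is_walk B tail head as \<and> head (last as) = tail (List.hd as))"

definition acyclic_graph :: "'a set \<Rightarrow> ('a \<Rightarrow> 'v) \<Rightarrow> ('a \<Rightarrow> 'v) \<Rightarrow> bool" where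
  "acyclic_graph B tail head \<longleftrightarrow> \<not> has_cycle B tail head"

definition tau_respecting :: "('a \<Rightarrow> nat) \<Rightarrow> 'a list \<Rightarrow> bool" where
  "tau_respecting \<tau> as \<longleftrightarrow> sorted (map \<tau> as)"

definition is_st_path ::
  "'a set \<Rightarrow> ('a \<Rightarrow> 'v) \<Rightarrow> ('a \<Rightarrow> 'v) \<Rightarrow> 'v \<Rightarrow> 'v \<Rightarrow> 'a list \<Rightarrow> bool" where
  "is_st_path B tail head x y as \<longleftrightarrow>
     is_path B tail head as \<and> tail (List.hd as) = x \<and> head (last as) = y"

definition temporal_lambda ::
  "'a set \<Rightarrow> ('a \<Rightarrow> 'v) \<Rightarrow> ('a \<Rightarrow> 'v) \<Rightarrow> ('a \<Rightarrow> nat) \<Rightarrow> 'v \<Rightarrow> 'v \<Rightarrow> nat" where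
  "temporal_lambda A tail head \<tau> s v = Sup {k. \<exists>P :: nat \<Rightarrow> 'a list.
      (\<forall>i<k. is_st_path A tail head s v (P i) \<and> tau_respecting \<tau> (P i)) \<and>
      (\<forall>i<k. \<forall>j<k. i \<noteq> j \<longrightarrow> set (P i) \<inter> set (P j) = {})}"

definition s_arborescence ::
  "'v set \<Rightarrow> 'v \<Rightarrow> 'a set \<Rightarrow> ('a \<Rightarrow> 'v) \<Rightarrow> ('a \<Rightarrow> 'v) \<Rightarrow> 'v set \<Rightarrow> 'a set \<Rightarrow> bool" where
  "s_arborescence V s A tail head V' A' \<longleftrightarrow>
     V' \<subseteq> V \<and> A' \<subseteq> A \<and>
     (\<forall>a\<in>A'. tail a \<in> V' \<union> {s} \<and> head a \<in> V' \<union> {s}) \<and>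
     acyclic_graph A' tail head \<and>
     (\<forall>v\<in>V'. card {a\<in>A'. head a = v} = 1)"

definition spanning_arborescence ::
  "'v set \<Rightarrow> 'v \<Rightarrow> 'a set \<Rightarrow> ('a \<Rightarrow> 'v) \<Rightarrow> ('a \<Rightarrow> 'v) \<Rightarrow> 'a set \<Rightarrow> bool" where
  "spanning_arborescence V s A tail head A' \<longleftrightarrow> s_arborescence V s A tail head V A'"

definition tau_respecting_arborescence ::
  "'v \<Rightarrow> 'a set \<Rightarrow> ('a \<Rightarrow> 'v) \<Rightarrow> ('a \<Rightarrow> 'v) \<Rightarrow> ('a \<Rightarrow> nat) \<Rightarrow> bool" where
  "tau_respecting_arborescence s A' tail head \<tau> \<longleftrightarrow>
     (\<forall>as. is_path A' tail head as \<and> tail (List.hd as) = s \<longrightarrow> tau_respecting \<tau> as)"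

end

theory Submission
  imports Defs "HOL-Library.Nat_Bijection"
begin

text \<open>
  Take 2k - 1 tokens x_i, each joined to s by one early arc (time 0) and k - 1 late arcs
  (time 2), and for every k-subset S of the tokens a vertex y_S entered by an arc of time 1
  from each token in S. Every vertex is reached by k arc-disjoint temporal paths: x_i by
  its k parallel arcs, y_S through the early arcs of the k tokens in S. In a
  \<tau>-respecting spanning arborescence, y_S is entered from some x_i with i in S, and x_i
  must then be entered by its early arc. So the tokens whose early arc is used meet every
  k-subset of the tokens, hence there are at least k of them, and two arc-disjoint such
  arborescences would need 2k early arcs.
\<close>

section \<open>Walks, paths and arborescences\<close>

lemma is_walk_Cons:
  assumes "rest \<noteq> []"
  shows "is_walk B tail head (a # rest) \<longleftrightarrow>
    a \<in> B \<and> head a = tail (hd rest) \<and> is_walk B tail head rest"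
proof -
  have "(\<forall>i. Suc i < length (a # rest) \<longrightarrow> head ((a # rest) ! i) = tail ((a # rest) ! Suc i)) \<longleftrightarrow>
        head a = tail (hd rest) \<and> (\<forall>i. Suc i < length rest \<longrightarrow> head (rest ! i) = tail (rest ! Suc i))"
    (is "(\<forall>i. ?P i) \<longleftrightarrow> _")
  proof -
    have "(\<forall>i. ?P i) \<longleftrightarrow> ?P 0 \<and> (\<forall>i. ?P (Suc i))" by (metis not0_implies_Suc)
    then show ?thesis using assms by (simp add: hd_conv_nth)
  qed
  then show ?thesis using assms by (auto simp: is_walk_def)
qed

lemma is_walk_rank_less:
  assumes "is_walk B tail head as" and "\<forall>a\<in>B. (r :: 'v \<Rightarrow> nat) (tail a) < r (head a)"
  shows "r (tail (hd as)) < r (head (last as))"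
  using assms(1)
proof (induction as)
  case Nil
  then show ?case by (simp add: is_walk_def)
next
  case (Cons a rest)
  show ?case
  proof (cases "rest = []")
    case True
    then show ?thesis using Cons.prems assms(2) by (auto simp: is_walk_def)
  next
    case False
    with Cons.prems have "a \<in> B" "head a = tail (hd rest)" "is_walk B tail head rest"
      by (simp_all add: is_walk_Cons)
    with Cons.IH False assms(2) show ?thesis by fastforce
  qed
qed

lemma acyclic_graph_rank:
  assumes "\<forall>a\<in>B. (r :: 'v \<Rightarrow> nat) (tail a) < r (head a)"
  shows "acyclic_graph B tail head"
  unfolding acyclic_graph_def has_cycle_def
  using is_walk_rank_less[where r = r, OF _ assms] by (metis less_irrefl)

lemma is_path_singleton: "a \<in> B \<Longrightarrow> tail a \<noteq> head a \<Longrightarrow> is_path B tail head [a]"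
  by (simp add: is_path_def is_walk_def)

lemma is_path_two_arcs:
  "a \<in> B \<Longrightarrow> b \<in> B \<Longrightarrow> head a = tail b \<Longrightarrow> distinct [tail a, head a, head b] \<Longrightarrow>
    is_path B tail head [a, b]"
  unfolding is_path_def is_walk_def by (auto simp: nth_Cons')

lemma temporal_lambda_lower_bound:
  assumes "finite A"
    and "\<forall>i<k. is_st_path A tail head s v (P i) \<and> tau_respecting \<tau> (P i)"
    and "\<forall>i<k. \<forall>j<k. i \<noteq> j \<longrightarrow> set (P i) \<inter> set (P j) = {}"
  shows "k \<le> temporal_lambda A tail head \<tau> s v"
proof -
  let ?K = "{k::nat. \<exists>P. (\<forall>i<k. is_st_path A tail head s v (P i) \<and> tau_respecting \<tau> (P i)) \<and>
      (\<forall>i<k. \<forall>j<k. i \<noteq> j \<longrightarrow> set (P i) \<inter> set (P j) = {})}"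
  have "k \<in> ?K"
    using assms(2,3) by blast
  moreover have "bdd_above ?K"
  proof (rule bdd_aboveI[of _ "card A"], clarify)
    fix k' and Q :: "nat \<Rightarrow> 'a list"
    assume paths: "\<forall>i<k'. is_st_path A tail head s v (Q i) \<and> tau_respecting \<tau> (Q i)"
      and disjoint: "\<forall>i<k'. \<forall>j<k'. i \<noteq> j \<longrightarrow> set (Q i) \<inter> set (Q j) = {}"
    have nonempty: "Q i \<noteq> [] \<and> set (Q i) \<subseteq> A" if "i < k'" for i
      using paths that by (auto simp: is_st_path_def is_path_def is_walk_def)
    \<comment> \<open>Disjoint paths have distinct first arcs, so there are at most |A| of them.\<close>
    have "inj_on (\<lambda>i. hd (Q i)) {..<k'}"
      by (rule inj_onI) (metis disjoint nonempty disjoint_iff hd_in_set lessThan_iff)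
    moreover have "(\<lambda>i. hd (Q i)) ` {..<k'} \<subseteq> A"
      using nonempty by (auto intro: hd_in_set)
    ultimately have "card {..<k'} \<le> card A"
      using card_inj_on_le assms(1) by blast
    then show "k' \<le> card A" by simp
  qed
  ultimately show ?thesis
    unfolding temporal_lambda_def by (rule cSup_upper)
qed

lemma spanning_arborescence_in_arc:
  assumes "spanning_arborescence V s A tail head F" and "v \<in> V"
  obtains a where "a \<in> F" and "a \<in> A" and "head a = v"
proof -
  have "card {a\<in>F. head a = v} = 1" and "F \<subseteq> A"
    using assms unfolding spanning_arborescence_def s_arborescence_def by auto
  then have "{a\<in>F. head a = v} \<noteq> {}" by (metis card.empty zero_neq_one)
  then show ?thesis using that \<open>F \<subseteq> A\<close> by blast
qed

lemma tau_respecting_arborescence_arc_pair: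
  assumes "tau_respecting_arborescence s F tail head \<tau>"
    and "c \<in> F" "b \<in> F" "tail c = s" "head c = tail b" "distinct [s, head c, head b]"
  shows "\<tau> c \<le> \<tau> b"
proof -
  have "is_path F tail head [c, b]"
    using assms(2-6) by (intro is_path_two_arcs) simp_all
  then have "tau_respecting \<tau> [c, b]"
    using assms(1,4) by (simp add: tau_respecting_arborescence_def)
  then show ?thesis by (simp add: tau_respecting_def)
qed

lemma card_meets_all_subsets:
  assumes "finite U" and "\<And>S. S \<subseteq> U \<Longrightarrow> card S = k \<Longrightarrow> S \<inter> E \<noteq> {}"
  shows "card U < card (U \<inter> E) + k"
proof (rule ccontr)
  assume "\<not> ?thesis"
  then have "k \<le> card (U - E)"
    using card_Diff_subset_Int[of U E] assms(1) by simp
  then obtain S where "S \<subseteq> U - E" and "card S = k"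
    by (meson obtain_subset_with_card_n)
  then show False using assms(2)[of S] by blast
qed

section \<open>The network\<close>

text \<open>
  Vertices and arcs must be natural numbers, so the construction is encoded with
  prod_encode, with root 0; a k-subset of tokens is represented by its set_encode code.
\<close>

definition token :: "nat \<Rightarrow> nat" where
  "token i = Suc (prod_encode (0, i))"

definition subset_vertex :: "nat \<Rightarrow> nat" where
  "subset_vertex n = Suc (prod_encode (1, n))"

definition early_arc :: "nat \<Rightarrow> nat" where
  "early_arc i = prod_encode (0, i)"

definition late_arc :: "nat \<Rightarrow> nat \<Rightarrow> nat" where
  "late_arc i j = prod_encode (1, prod_encode (i, j))"

definition link_arc :: "nat \<Rightarrow> nat \<Rightarrow> nat" where
  "link_arc i n = prod_encode (2, prod_encode (i, n))"

definition arc_tail :: "nat \<Rightarrow> nat" where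
  "arc_tail a = (case prod_decode a of (t, p) \<Rightarrow> if t = 2 then token (fst (prod_decode p)) else 0)"

definition arc_head :: "nat \<Rightarrow> nat" where
  "arc_head a = (case prod_decode a of (t, p) \<Rightarrow>
     if t = 0 then token p
     else if t = 1 then token (fst (prod_decode p))
     else subset_vertex (snd (prod_decode p)))"

definition arc_time :: "nat \<Rightarrow> nat" where
  "arc_time a = (case fst (prod_decode a) of 0 \<Rightarrow> 0 | Suc 0 \<Rightarrow> 2 | _ \<Rightarrow> 1)"

definition vertex_level :: "nat \<Rightarrow> nat" where
  "vertex_level v = (if v = 0 then 0 else if fst (prod_decode (v - 1)) = 0 then 1 else 2)"

definition subset_codes :: "nat \<Rightarrow> nat set" where
  "subset_codes k = {n. set_decode n \<subseteq> {..<2*k-1} \<and> card (set_decode n) = k}"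

definition network_vertices :: "nat \<Rightarrow> nat set" where
  "network_vertices k = token ` {..<2*k-1} \<union> subset_vertex ` subset_codes k"

definition network_arcs :: "nat \<Rightarrow> nat set" where
  "network_arcs k = early_arc ` {..<2*k-1}
     \<union> (\<lambda>(i, j). late_arc i j) ` ({..<2*k-1} \<times> {..<k-1})
     \<union> (\<lambda>(n, i). link_arc i n) ` (SIGMA n:subset_codes k. set_decode n)"

lemma arc_simps [simp]:
  "arc_tail (early_arc i) = 0" "arc_tail (late_arc i j) = 0" "arc_tail (link_arc i n) = token i"
  "arc_head (early_arc i) = token i" "arc_head (late_arc i j) = token i"
  "arc_head (link_arc i n) = subset_vertex n"
  "arc_time (early_arc i) = 0" "arc_time (late_arc i j) = 2" "arc_time (link_arc i n) = 1"
  by (simp_all add: arc_tail_def arc_head_def arc_time_def early_arc_def late_arc_def link_arc_def)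

lemma vertex_simps [simp]:
  "vertex_level 0 = 0" "vertex_level (token i) = 1" "vertex_level (subset_vertex n) = 2"
  "token i \<noteq> 0" "subset_vertex n \<noteq> 0"
  "token i \<noteq> subset_vertex n" "subset_vertex n \<noteq> token i"
  "token i = token i' \<longleftrightarrow> i = i'" "subset_vertex n = subset_vertex n' \<longleftrightarrow> n = n'"
  by (simp_all add: vertex_level_def token_def subset_vertex_def prod_encode_eq)

lemma arc_eq_simps [simp]:
  "early_arc i = early_arc i' \<longleftrightarrow> i = i'"
  "late_arc i j = late_arc i' j' \<longleftrightarrow> i = i' \<and> j = j'"
  "link_arc i n = link_arc i' n' \<longleftrightarrow> i = i' \<and> n = n'"
  "early_arc i \<noteq> late_arc i' j'" "early_arc i \<noteq> link_arc i' n'" "late_arc i j \<noteq> link_arc i' n'"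
  "late_arc i' j' \<noteq> early_arc i" "link_arc i' n' \<noteq> early_arc i" "link_arc i' n' \<noteq> late_arc i j"
  by (simp_all add: early_arc_def late_arc_def link_arc_def prod_encode_eq)

lemma finite_subset_codes: "finite (subset_codes k)"
proof (rule finite_subset)
  show "subset_codes k \<subseteq> set_encode ` Pow {..<2*k-1}"
  proof
    fix n assume "n \<in> subset_codes k"
    then have "set_decode n \<in> Pow {..<2*k-1}" by (simp add: subset_codes_def)
    then show "n \<in> set_encode ` Pow {..<2*k-1}" by (metis image_eqI set_decode_inverse)
  qed
qed simp

lemma set_encode_in_subset_codes:
  "S \<subseteq> {..<2*k-1} \<Longrightarrow> card S = k \<Longrightarrow> set_encode S \<in> subset_codes k"
  using finite_subset[of S "{..<2*k-1}"] by (simp add: subset_codes_def)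

lemma network_arcs_cases:
  assumes "a \<in> network_arcs k"
  obtains (early) i where "i < 2*k-1" "a = early_arc i"
  | (late) i j where "i < 2*k-1" "j < k-1" "a = late_arc i j"
  | (link) n i where "n \<in> subset_codes k" "i \<in> set_decode n" "a = link_arc i n"
  using assms unfolding network_arcs_def by auto

lemma early_arc_in_network: "i < 2*k-1 \<Longrightarrow> early_arc i \<in> network_arcs k"
  and late_arc_in_network: "i < 2*k-1 \<Longrightarrow> j < k-1 \<Longrightarrow> late_arc i j \<in> network_arcs k"
  and link_arc_in_network: "n \<in> subset_codes k \<Longrightarrow> i \<in> set_decode n \<Longrightarrow> link_arc i n \<in> network_arcs k"
  unfolding network_arcs_def by force+

lemma token_in_network: "i < 2*k-1 \<Longrightarrow> token i \<in> network_vertices k"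
  and subset_vertex_in_network: "n \<in> subset_codes k \<Longrightarrow> subset_vertex n \<in> network_vertices k"
  unfolding network_vertices_def by blast+

lemma temporal_network_construction:
  "temporal_network (network_vertices k) 0 (network_arcs k) arc_tail arc_head"
  unfolding temporal_network_def
proof (intro conjI)
  show "finite (network_vertices k)" and "finite (network_arcs k)"
    using finite_subset_codes unfolding network_vertices_def network_arcs_def
    by (auto intro!: finite_SigmaI)
  show "0 \<notin> network_vertices k" by (auto simp: network_vertices_def)
  show "\<forall>a\<in>network_arcs k. arc_tail a \<in> network_vertices k \<union> {0} \<and>
      arc_head a \<in> network_vertices k \<union> {0} \<and> arc_head a \<noteq> 0"
  proof
    fix a assume "a \<in> network_arcs k"
    then show "arc_tail a \<in> network_vertices k \<union> {0} \<and>
        arc_head a \<in> network_vertices k \<union> {0} \<and> arc_head a \<noteq> 0"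
      by (cases rule: network_arcs_cases)
        (auto simp: subset_codes_def intro!: token_in_network subset_vertex_in_network)
  qed
qed

lemma acyclic_construction: "acyclic_graph (network_arcs k) arc_tail arc_head"
  by (rule acyclic_graph_rank[where r = vertex_level])
    (auto elim: network_arcs_cases)

lemma temporal_lambda_token:
  assumes "i < 2*k-1"
  shows "k \<le> temporal_lambda (network_arcs k) arc_tail arc_head arc_time 0 (token i)"
  using temporal_network_construction[of k] assms
  by (intro temporal_lambda_lower_bound[where P = "\<lambda>j. if j = 0 then [early_arc i] else [late_arc i (j-1)]"])
    (auto simp: temporal_network_def is_st_path_def tau_respecting_def
      intro!: is_path_singleton early_arc_in_network late_arc_in_network)

lemma temporal_lambda_subset_vertex:
  assumes "n \<in> subset_codes k"
  shows "k \<le> temporal_lambda (network_arcs k) arc_tail arc_head arc_time 0 (subset_vertex n)"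
proof -
  have S: "set_decode n \<subseteq> {..<2*k-1}" "card (set_decode n) = k"
    using assms by (simp_all add: subset_codes_def)
  then obtain h where h: "bij_betw h {0..<k} (set_decode n)"
    using ex_bij_betw_nat_finite[of "set_decode n"] by auto
  have "is_st_path (network_arcs k) arc_tail arc_head 0 (subset_vertex n) [early_arc (h j), link_arc (h j) n]"
    if "j < k" for j
  proof -
    have "h j \<in> set_decode n" using h that by (auto dest: bij_betwE)
    then show ?thesis using S assms unfolding is_st_path_def
      by (auto intro!: is_path_two_arcs early_arc_in_network link_arc_in_network)
  qed
  moreover have "h j = h j' \<Longrightarrow> j = j'" if "j < k" "j' < k" for j j'
    using h that unfolding bij_betw_def inj_on_def by auto
  ultimately show ?thesis
    using temporal_network_construction[of k]
    by (intro temporal_lambda_lower_bound[where P = "\<lambda>j. [early_arc (h j), link_arc (h j) n]"])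
      (auto simp: temporal_network_def tau_respecting_def)
qed

lemma temporal_lambda_construction:
  "v \<in> network_vertices k \<Longrightarrow> k \<le> temporal_lambda (network_arcs k) arc_tail arc_head arc_time 0 v"
  unfolding network_vertices_def using temporal_lambda_token temporal_lambda_subset_vertex by blast

lemma arborescence_uses_early_arc_of_subset:
  assumes "spanning_arborescence (network_vertices k) 0 (network_arcs k) arc_tail arc_head F"
    and "tau_respecting_arborescence 0 F arc_tail arc_head arc_time"
    and "S \<subseteq> {..<2*k-1}" and "card S = k"
  shows "\<exists>i\<in>S. early_arc i \<in> F"
proof -
  define n where "n = set_encode S"
  have n: "n \<in> subset_codes k" "set_decode n = S"
    using assms(3,4) finite_subset[OF assms(3)] by (simp_all add: n_def set_encode_in_subset_codes)
  obtain b where b: "b \<in> F" "b \<in> network_arcs k" "arc_head b = subset_vertex n"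
    using spanning_arborescence_in_arc[OF assms(1) subset_vertex_in_network[OF n(1)]] .
  from b(2,3) obtain i where i: "i \<in> S" "b = link_arc i n"
    by (cases rule: network_arcs_cases) (use n in auto)
  then have "i < 2*k-1" using assms(3) by blast
  then obtain c where c: "c \<in> F" "c \<in> network_arcs k" "arc_head c = token i"
    using spanning_arborescence_in_arc[OF assms(1) token_in_network] by metis
  from c(2) have "c = early_arc i"
  proof (cases rule: network_arcs_cases)
    case (late i' j)
    \<comment> \<open>A late in-arc of token i would precede the time-1 arc b in F.\<close>
    then have "arc_time c \<le> arc_time b"
      using b c i by (intro tau_respecting_arborescence_arc_pair[OF assms(2)]) auto
    with late i show ?thesis by simp
  qed (use c in auto)
  with c(1) i(1) show ?thesis by blast
qed

lemma card_early_arcs_of_arborescence: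
  assumes "spanning_arborescence (network_vertices k) 0 (network_arcs k) arc_tail arc_head F"
    and "tau_respecting_arborescence 0 F arc_tail arc_head arc_time"
  shows "k \<le> card ({..<2*k-1} \<inter> {i. early_arc i \<in> F})"
proof -
  have "card {..<2*k-1} < card ({..<2*k-1} \<inter> {i. early_arc i \<in> F}) + k"
    by (rule card_meets_all_subsets) (use arborescence_uses_early_arc_of_subset[OF assms] in auto)
  then show ?thesis by simp
qed

lemma no_disjoint_tau_respecting_arborescences:
  assumes "spanning_arborescence (network_vertices k) 0 (network_arcs k) arc_tail arc_head F1"
    and "tau_respecting_arborescence 0 F1 arc_tail arc_head arc_time"
    and "spanning_arborescence (network_vertices k) 0 (network_arcs k) arc_tail arc_head F2"
    and "tau_respecting_arborescence 0 F2 arc_tail arc_head arc_time"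
    and "k \<ge> 1"
  shows "F1 \<inter> F2 \<noteq> {}"
proof
  assume "F1 \<inter> F2 = {}"
  let ?E1 = "{..<2*k-1} \<inter> {i. early_arc i \<in> F1}" and ?E2 = "{..<2*k-1} \<inter> {i. early_arc i \<in> F2}"
  have "card ?E1 + card ?E2 = card (?E1 \<union> ?E2)"
    using \<open>F1 \<inter> F2 = {}\<close> by (intro card_Un_disjoint[symmetric]) auto
  also have "\<dots> \<le> card {..<2*k-1}" by (rule card_mono) auto
  finally show False
    using card_early_arcs_of_arborescence[OF assms(1,2)] card_early_arcs_of_arborescence[OF assms(3,4)]
      assms(5) by simp
qed

theorem theorem11:
  shows "\<forall>k::nat. k \<ge> 1 \<longrightarrow>
    (\<exists>(V::nat set) (s::nat) (A::nat set) (tail::nat \<Rightarrow> nat) (head::nat \<Rightarrow> nat) (\<tau>::nat \<Rightarrow> nat).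
       temporal_network V s A tail head \<and>
       acyclic_graph A tail head \<and>
       (\<forall>v\<in>V. temporal_lambda A tail head \<tau> s v \<ge> k) \<and>
       \<not> (\<exists>A1 A2. spanning_arborescence V s A tail head A1 \<and>
                  tau_respecting_arborescence s A1 tail head \<tau> \<and>
                  spanning_arborescence V s A tail head A2 \<and>
                  tau_respecting_arborescence s A2 tail head \<tau> \<and>
                  A1 \<inter> A2 = {}))"
proof (intro allI impI exI conjI)
  fix k :: nat
  assume "k \<ge> 1"
  show "temporal_network (network_vertices k) 0 (network_arcs k) arc_tail arc_head"
    by (rule temporal_network_construction)
  show "acyclic_graph (network_arcs k) arc_tail arc_head"
    by (rule acyclic_construction)
  show "\<forall>v\<in>network_vertices k. k \<le> temporal_lambda (network_arcs k) arc_tail arc_head arc_time 0 v"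
    using temporal_lambda_construction by blast
  show "\<not> (\<exists>A1 A2. spanning_arborescence (network_vertices k) 0 (network_arcs k) arc_tail arc_head A1 \<and>
      tau_respecting_arborescence 0 A1 arc_tail arc_head arc_time \<and>
      spanning_arborescence (network_vertices k) 0 (network_arcs k) arc_tail arc_head A2 \<and>
      tau_respecting_arborescence 0 A2 arc_tail arc_head arc_time \<and> A1 \<inter> A2 = {})"
    using no_disjoint_tau_respecting_arborescences \<open>k \<ge> 1\<close> by blast
qed

end
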